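(* Let $b_1\ge b_2\ge\cdots\ge b_m>0$ be real numbers and let $k\in[m-1]$. Then $$1-\frac km\le\delta_k:=\frac{\sum_{S\subset[m-1],|S|=k}\mathbf{b}^S}{\sum_{S\subset[m],|S|=k}\mathbf{b}^S}\le\min\Big\{1,\frac{b_1}{b_m}\Big(1-\frac km\Big)\Big\}.$$
   Context: For $S\subset[m]$, $\mathbf{b}^S=\prod_{i\in S}b_i$. *)

theory Defs
  imports Main "HOL.Real"
begin

definition esym :: "(nat \<Rightarrow> real) \<Rightarrow> nat \<Rightarrow> nat \<Rightarrow> real" where
  "esym b n k = (\<Sum>S\<in>{S. S \<subseteq> {1..n} \<and> card S = k}. \<Prod>i\<in>S. b i)"

definition delta :: "(nat \<Rightarrow> real) \<Rightarrow> nat \<Rightarrow> nat \<Rightarrow> real" where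
  "delta b m k = esym b (m - 1) k / esym b m k"

end

theory Submission
  imports Defs
begin

text \<open>Write \<open>e\<^sub>k(A)\<close> for the \<open>k\<close>-th elementary symmetric sum of the \<open>b\<^sub>i\<close>, \<open>i \<in> A\<close>, so that
  \<open>\<delta>\<^sub>k = e\<^sub>k([m] - {m}) / e\<^sub>k([m])\<close>. Double counting gives
  \<open>\<Sum>\<^sub>j e\<^sub>k([m] - {j}) = (m - k) e\<^sub>k([m])\<close>. Writing \<open>[m] - {j}\<close> and \<open>[m] - {m}\<close> as
  \<open>B \<union> {m}\<close> and \<open>B \<union> {j}\<close> shows that removing the smallest element \<open>b\<^sub>m\<close> leaves the largest
  sum, which gives the lower bound, and that \<open>b\<^sub>m e\<^sub>k([m] - {m}) \<le> b\<^sub>j e\<^sub>k([m] - {j}) \<le> b\<^sub>1 e\<^sub>k([m] - {j})\<close>,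
  which summed over \<open>j\<close> gives the upper bound. Finally \<open>\<delta>\<^sub>k \<le> 1\<close> because \<open>e\<^sub>k\<close> is monotone
  in the index set.\<close>

definition esym_on :: "('a \<Rightarrow> real) \<Rightarrow> 'a set \<Rightarrow> nat \<Rightarrow> real" where
  "esym_on b A k = (\<Sum>S\<in>{S. S \<subseteq> A \<and> card S = k}. \<Prod>i\<in>S. b i)"

lemma esym_eq_esym_on: "esym b n k = esym_on b {1..n} k"
  unfolding esym_def esym_on_def ..

lemma k_subsets_insert:
  assumes "finite A" "a \<notin> A"
  shows "{S. S \<subseteq> insert a A \<and> card S = Suc k} =
    {S. S \<subseteq> A \<and> card S = Suc k} \<union> insert a ` {S. S \<subseteq> A \<and> card S = k}"
proof (intro set_eqI iffI)
  fix S assume "S \<in> {S. S \<subseteq> insert a A \<and> card S = Suc k}"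
  then show "S \<in> {S. S \<subseteq> A \<and> card S = Suc k} \<union> insert a ` {S. S \<subseteq> A \<and> card S = k}"
    using assms by (cases "a \<in> S")
      (auto simp: image_iff subset_insert_iff intro!: exI[of _ "S - {a}"] dest: finite_subset)
next
  fix S assume "S \<in> {S. S \<subseteq> A \<and> card S = Suc k} \<union> insert a ` {S. S \<subseteq> A \<and> card S = k}"
  then show "S \<in> {S. S \<subseteq> insert a A \<and> card S = Suc k}"
    using assms by (auto intro: card_insert_disjoint dest: finite_subset)
qed

lemma esym_on_insert:
  assumes "finite A" "a \<notin> A"
  shows "esym_on b (insert a A) (Suc k) = esym_on b A (Suc k) + b a * esym_on b A k"
proof -
  let ?K = "\<lambda>j. {S. S \<subseteq> A \<and> card S = j}"
  have inj: "inj_on (insert a) (?K k)"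
  proof (rule inj_onI)
    fix X Y assume "X \<in> ?K k" "Y \<in> ?K k" "insert a X = insert a Y"
    with assms(2) show "X = Y" by (metis Diff_insert_absorb subsetD mem_Collect_eq)
  qed
  have "esym_on b (insert a A) (Suc k) =
      esym_on b A (Suc k) + (\<Sum>S\<in>insert a ` ?K k. \<Prod>i\<in>S. b i)"
    unfolding esym_on_def k_subsets_insert[OF assms]
    using assms by (intro sum.union_disjoint) auto
  also have "(\<Sum>S\<in>insert a ` ?K k. \<Prod>i\<in>S. b i) = (\<Sum>S\<in>?K k. b a * (\<Prod>i\<in>S. b i))"
    unfolding sum.reindex[OF inj] using assms
    by (intro sum.cong refl) (auto simp: prod.insert_if finite_subset[of _ A])
  also have "\<dots> = b a * esym_on b A k"
    by (simp add: esym_on_def sum_distrib_left)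
  finally show ?thesis .
qed

lemma esym_on_nonneg:
  assumes "\<And>i. i \<in> A \<Longrightarrow> 0 \<le> b i"
  shows "0 \<le> esym_on b A k"
  unfolding esym_on_def by (intro sum_nonneg prod_nonneg) (use assms in blast)

lemma esym_on_pos:
  assumes "finite A" "\<And>i. i \<in> A \<Longrightarrow> 0 < b i" "k \<le> card A"
  shows "0 < esym_on b A k"
proof -
  obtain S where S: "S \<subseteq> A" "card S = k"
    using obtain_subset_with_card_n[OF assms(3)] by blast
  have "0 < (\<Prod>i\<in>S. b i)"
    using S assms(2) by (intro prod_pos) blast
  also have "\<dots> \<le> esym_on b A k"
    unfolding esym_on_def using S assms(1)
  proof (intro member_le_sum)
    show "0 \<le> (\<Prod>i\<in>T. b i)" if "T \<in> {S. S \<subseteq> A \<and> card S = k} - {S}" for T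
      using that assms(2) by (intro prod_nonneg) (auto intro: less_imp_le)
  qed auto
  finally show ?thesis .
qed

lemma esym_on_mono:
  assumes "A \<subseteq> B" "finite B" "\<And>i. i \<in> B \<Longrightarrow> 0 \<le> b i"
  shows "esym_on b A k \<le> esym_on b B k"
  unfolding esym_on_def using assms
  by (intro sum_mono2 prod_nonneg) auto

text \<open>Each \<open>k\<close>-subset \<open>S\<close> of \<open>A\<close> is counted once for every \<open>j \<in> A - S\<close>.\<close>

lemma sum_esym_on_remove:
  assumes "finite A"
  shows "(\<Sum>j\<in>A. esym_on b (A - {j}) k) = real (card A - k) * esym_on b A k"
proof -
  let ?K = "{S. S \<subseteq> A \<and> card S = k}"
  have "esym_on b (A - {j}) k = (\<Sum>S\<in>?K. if j \<notin> S then \<Prod>i\<in>S. b i else 0)" for j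
  proof -
    have "{S \<in> ?K. j \<notin> S} = {S. S \<subseteq> A - {j} \<and> card S = k}"
      by auto
    then show ?thesis
      using assms by (simp add: esym_on_def sum.inter_filter[symmetric])
  qed
  then have "(\<Sum>j\<in>A. esym_on b (A - {j}) k) =
      (\<Sum>S\<in>?K. \<Sum>j\<in>A. if j \<notin> S then \<Prod>i\<in>S. b i else 0)"
    using sum.swap by simp
  also have "\<dots> = (\<Sum>S\<in>?K. real (card A - k) * (\<Prod>i\<in>S. b i))"
  proof (intro sum.cong refl)
    fix S assume S: "S \<in> ?K"
    have "{j \<in> A. j \<notin> S} = A - S"
      by auto
    moreover have "card (A - S) = card A - k"
      using S assms by (metis (mono_tags) card_Diff_subset finite_subset mem_Collect_eq)
    ultimately show "(\<Sum>j\<in>A. if j \<notin> S then \<Prod>i\<in>S. b i else 0) = real (card A - k) * (\<Prod>i\<in>S. b i)"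
      using assms by (simp add: sum.inter_filter[symmetric])
  qed
  also have "\<dots> = real (card A - k) * esym_on b A k"
    by (simp add: esym_on_def sum_distrib_left)
  finally show ?thesis .
qed

lemma
  assumes "finite A" "j \<in> A" "m \<in> A" "b m \<le> b j" "\<And>i. i \<in> A \<Longrightarrow> 0 \<le> b i"
  shows esym_on_remove_larger_le: "esym_on b (A - {j}) (Suc k) \<le> esym_on b (A - {m}) (Suc k)"
    and esym_on_remove_weighted_le:
      "b m * esym_on b (A - {m}) (Suc k) \<le> b j * esym_on b (A - {j}) (Suc k)"
proof -
  define B where "B = A - {j, m}"
  have nonneg: "0 \<le> esym_on b B k" "0 \<le> esym_on b B (Suc k)"
    using assms(5) unfolding B_def by (intro esym_on_nonneg; simp)+
  have split: "esym_on b (A - {j}) (Suc k) = esym_on b B (Suc k) + b m * esym_on b B k"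
    "esym_on b (A - {m}) (Suc k) = esym_on b B (Suc k) + b j * esym_on b B k" if "j \<noteq> m"
  proof -
    have "A - {j} = insert m B" "A - {m} = insert j B" "m \<notin> B" "j \<notin> B" "finite B"
      using assms(1-3) that by (auto simp: B_def)
    then show "esym_on b (A - {j}) (Suc k) = esym_on b B (Suc k) + b m * esym_on b B k"
      "esym_on b (A - {m}) (Suc k) = esym_on b B (Suc k) + b j * esym_on b B k"
      by (simp_all add: esym_on_insert)
  qed
  have "b m * esym_on b B k \<le> b j * esym_on b B k"
    using assms(4) nonneg(1) by (rule mult_right_mono)
  moreover have "b m * esym_on b B (Suc k) \<le> b j * esym_on b B (Suc k)"
    using assms(4) nonneg(2) by (rule mult_right_mono)
  ultimately show "esym_on b (A - {j}) (Suc k) \<le> esym_on b (A - {m}) (Suc k)"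
    and "b m * esym_on b (A - {m}) (Suc k) \<le> b j * esym_on b (A - {j}) (Suc k)"
    by (cases "j = m"; simp add: split distrib_left mult.left_commute)+
qed

lemma esym_on_remove_min_lower:
  assumes "finite A" "m \<in> A" "\<And>j. j \<in> A \<Longrightarrow> b m \<le> b j" "\<And>i. i \<in> A \<Longrightarrow> 0 \<le> b i"
  shows "real (card A - Suc k) * esym_on b A (Suc k) \<le> real (card A) * esym_on b (A - {m}) (Suc k)"
proof -
  have "real (card A - Suc k) * esym_on b A (Suc k) = (\<Sum>j\<in>A. esym_on b (A - {j}) (Suc k))"
    using assms(1) by (rule sum_esym_on_remove[symmetric])
  also have "\<dots> \<le> (\<Sum>j\<in>A. esym_on b (A - {m}) (Suc k))"
    using assms by (intro sum_mono esym_on_remove_larger_le)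
  finally show ?thesis
    by simp
qed

lemma esym_on_remove_min_upper:
  assumes "finite A" "m \<in> A" "\<And>j. j \<in> A \<Longrightarrow> b m \<le> b j"
    "\<And>j. j \<in> A \<Longrightarrow> b j \<le> M" "\<And>i. i \<in> A \<Longrightarrow> 0 \<le> b i"
  shows "real (card A) * (b m * esym_on b (A - {m}) (Suc k))
    \<le> M * (real (card A - Suc k) * esym_on b A (Suc k))"
proof -
  have "real (card A) * (b m * esym_on b (A - {m}) (Suc k))
      = (\<Sum>j\<in>A. b m * esym_on b (A - {m}) (Suc k))"
    by simp
  also have "\<dots> \<le> (\<Sum>j\<in>A. M * esym_on b (A - {j}) (Suc k))"
  proof (rule sum_mono)
    fix j assume "j \<in> A"
    then have "b m * esym_on b (A - {m}) (Suc k) \<le> b j * esym_on b (A - {j}) (Suc k)"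
      using assms by (intro esym_on_remove_weighted_le) auto
    also have "\<dots> \<le> M * esym_on b (A - {j}) (Suc k)"
      using \<open>j \<in> A\<close> assms by (intro mult_right_mono esym_on_nonneg) auto
    finally show "b m * esym_on b (A - {m}) (Suc k) \<le> M * esym_on b (A - {j}) (Suc k)" .
  qed
  also have "\<dots> = M * (real (card A - Suc k) * esym_on b A (Suc k))"
    using assms(1) by (simp add: sum_distrib_left[symmetric] sum_esym_on_remove)
  finally show ?thesis .
qed

theorem lemma2p4:
  fixes b :: "nat \<Rightarrow> real" and m k :: nat
  assumes mono: "\<And>i j. 1 \<le> i \<Longrightarrow> i \<le> j \<Longrightarrow> j \<le> m \<Longrightarrow> b j \<le> b i"
    and pos: "b m > 0"
    and k: "1 \<le> k" "k \<le> m - 1"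
  shows "1 - real k / real m \<le> delta b m k \<and>
         delta b m k \<le> min 1 ((b 1 / b m) * (1 - real k / real m))"
proof -
  obtain k' where k': "k = Suc k'"
    using k by (cases k) auto
  define A where "A = {1..m}"
  have A: "finite A" "m \<in> A" "card A = m" "A - {m} = {1..m - 1}" "card (A - {m}) = m - 1"
    using k by (auto simp: A_def)
  have b_min: "b m \<le> b j" and b_max: "b j \<le> b 1" if "j \<in> A" for j
    using that mono by (auto simp: A_def)
  have b_pos: "0 < b i" if "i \<in> A" for i
    using b_min[OF that] pos by linarith
  have b_nonneg: "0 \<le> b i" if "i \<in> A" for i
    using b_pos[OF that] by simp
  define E E' where "E = esym_on b A k" and "E' = esym_on b (A - {m}) k"
  have delta: "delta b m k = E' / E"
    by (simp add: delta_def esym_eq_esym_on E_def E'_def A(4)) (simp add: A_def)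
  have "0 < E'"
    unfolding E'_def using A(1) b_pos k by (intro esym_on_pos) (simp_all add: A(5))
  moreover have "E' \<le> E"
    unfolding E_def E'_def using A(1) b_nonneg by (intro esym_on_mono) auto
  moreover have "real (m - k) * E \<le> real m * E'"
    using esym_on_remove_min_lower[of A m b k', OF A(1,2) b_min b_nonneg]
    unfolding E_def E'_def k' A(3) .
  moreover have "real m * (b m * E') \<le> b 1 * (real (m - k) * E)"
    using esym_on_remove_min_upper[of A m b "b 1" k', OF A(1,2) b_min b_max b_nonneg]
    unfolding E_def E'_def k' A(3) .
  moreover have "real (m - k) = real m - real k" "0 < real m"
    using k by auto
  ultimately show ?thesis
    using pos by (simp add: delta field_simps)
qed

end
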